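(* Let $A$ be a local ring with maximal ideal $\mathfrak m$ and residue field $k$, and assume $2\in A^\times$. Then $u(A)$ equals the smallest $u\in\mathbb Z_{\geq1}\cup\{\infty\}$ such that every non-singular quadratic module $(V,q)$ over $A$ with $\dim_k V/\mathfrak mV\geq u$ is universal.
   Context: A quadratic module over $A$ is $(V,q)$ with $V$ finitely generated projective, $q(ax)=a^2q(x)$ and $B_q(x,y)=q(x+y)-q(x)-q(y)$ bilinear; non-singular if $x\mapsto B_q(x,-)$ is an isomorphism $V\to\mathrm{Hom}_A(V,A)$. $(V,q)$ is isotropic if there is $x\in V\setminus\mathfrak mV$ with $q(x)=0$, anisotropic otherwise, and universal if it represents every unit, i.e. for each $a\in A^\times$ there is $x$ with $q(x)=a$. $u(A)=\sup\{\dim_k V/\mathfrak mV : (V,q)\text{ non-singular and anisotropic}\}$. *)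

theory Defs
  imports Main "HOL-Library.Extended_Nat"
begin

text \<open>Local ring (commutative, 1 \<noteq> 0): the non-units form an ideal, i.e. they are closed
  under addition (closure under multiplication by ring elements is automatic).\<close>
definition local_ring :: "'a::comm_ring_1 itself \<Rightarrow> bool" where
  "local_ring _ \<longleftrightarrow> (0::'a) \<noteq> 1 \<and>
     (\<forall>a b::'a. \<not> a dvd 1 \<and> \<not> b dvd 1 \<longrightarrow> \<not> (a + b) dvd 1)"

definition max_ideal :: "'a::comm_ring_1 set" where
  "max_ideal = {a. \<not> a dvd 1}"

text \<open>Over a local ring every finitely generated projective module is free; we model a
  module of rank n as A^n, i.e. functions nat => A vanishing from index n on.\<close>
definition vecs :: "nat \<Rightarrow> (nat \<Rightarrow> 'a::comm_ring_1) set" where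
  "vecs n = {x. \<forall>i\<ge>n. x i = 0}"

definition polar :: "((nat \<Rightarrow> 'a::comm_ring_1) \<Rightarrow> 'a) \<Rightarrow> (nat \<Rightarrow> 'a) \<Rightarrow> (nat \<Rightarrow> 'a) \<Rightarrow> 'a" where
  "polar q x y = q (\<lambda>i. x i + y i) - q x - q y"

definition linear_form :: "nat \<Rightarrow> ((nat \<Rightarrow> 'a::comm_ring_1) \<Rightarrow> 'a) \<Rightarrow> bool" where
  "linear_form n f \<longleftrightarrow>
     (\<forall>x\<in>vecs n. \<forall>y\<in>vecs n. f (\<lambda>i. x i + y i) = f x + f y) \<and>
     (\<forall>a. \<forall>x\<in>vecs n. f (\<lambda>i. a * x i) = a * f x)"

definition quadratic_module :: "nat \<Rightarrow> ((nat \<Rightarrow> 'a::comm_ring_1) \<Rightarrow> 'a) \<Rightarrow> bool" where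
  "quadratic_module n q \<longleftrightarrow>
     (\<forall>a. \<forall>x\<in>vecs n. q (\<lambda>i. a * x i) = a ^ 2 * q x) \<and>
     (\<forall>x\<in>vecs n. linear_form n (polar q x)) \<and>
     (\<forall>y\<in>vecs n. linear_form n (\<lambda>x. polar q x y))"

definition nonsingular_qm :: "nat \<Rightarrow> ((nat \<Rightarrow> 'a::comm_ring_1) \<Rightarrow> 'a) \<Rightarrow> bool" where
  "nonsingular_qm n q \<longleftrightarrow> quadratic_module n q \<and>
     (\<forall>x\<in>vecs n. \<forall>x'\<in>vecs n. (\<forall>y\<in>vecs n. polar q x y = polar q x' y) \<longrightarrow> x = x') \<and>
     (\<forall>f. linear_form n f \<longrightarrow> (\<exists>x\<in>vecs n. \<forall>y\<in>vecs n. polar q x y = f y))"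

text \<open>x \<notin> m V  iff some coordinate of x is not in the maximal ideal.\<close>
definition isotropic :: "nat \<Rightarrow> ((nat \<Rightarrow> 'a::comm_ring_1) \<Rightarrow> 'a) \<Rightarrow> bool" where
  "isotropic n q \<longleftrightarrow> (\<exists>x\<in>vecs n. (\<exists>i<n. x i \<notin> max_ideal) \<and> q x = 0)"

definition anisotropic :: "nat \<Rightarrow> ((nat \<Rightarrow> 'a::comm_ring_1) \<Rightarrow> 'a) \<Rightarrow> bool" where
  "anisotropic n q \<longleftrightarrow> \<not> isotropic n q"

definition universal :: "nat \<Rightarrow> ((nat \<Rightarrow> 'a::comm_ring_1) \<Rightarrow> 'a) \<Rightarrow> bool" where
  "universal n q \<longleftrightarrow> (\<forall>a::'a. a dvd 1 \<longrightarrow> (\<exists>x\<in>vecs n. q x = a))"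

definition u_invariant :: "'a::comm_ring_1 itself \<Rightarrow> enat" where
  "u_invariant _ = Sup {enat n | n. \<exists>q :: (nat \<Rightarrow> 'a) \<Rightarrow> 'a. nonsingular_qm n q \<and> anisotropic n q}"

end

theory Submission
  imports Defs "HOL-Library.Function_Algebras"
begin

text \<open>
  Let S be the set of dimensions of non-singular anisotropic forms, so that u(A) = sup S; the
  form x_0^2 shows 1 \<in> S.

  If q is non-singular and a is a unit, then q \<perp> \<langle>-a\<rangle> is non-singular. Once it is isotropic,
  moving an isotropic vector inside a hyperbolic plane makes its last coordinate a unit, and
  rescaling gives q(x) = a. Hence every non-singular form of dimension at least u(A) is
  universal, since q \<perp> \<langle>-a\<rangle> is then too large to be anisotropic.

  Conversely, a non-singular form q of dimension m > 0 represents a unit q(v), and since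
  B(v,v) = 2q(v) is a unit the orthogonal complement of v is a non-singular form of dimension
  m - 1. If that complement represents -q(v) at w, then v + w is isotropic and primitive, because
  B(v, v + w) = 2q(v) is a unit. So an anisotropic form of dimension m yields a non-universal
  non-singular form of dimension m - 1, and no u < u(A) has the universality property.
\<close>

section \<open>Coordinate vectors and linear forms\<close>

definition scale :: "'a::comm_ring_1 \<Rightarrow> (nat \<Rightarrow> 'a) \<Rightarrow> nat \<Rightarrow> 'a" where
  "scale a x i = a * x i"

definition unit_vec :: "nat \<Rightarrow> nat \<Rightarrow> 'a::comm_ring_1" where
  "unit_vec j i = (if i = j then 1 else 0)"

lemma scale_apply [simp]: "scale a x i = a * x i"
  by (simp add: scale_def)

lemma scale_diff_right: "scale a (x - y) = scale a x - scale a y"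
  by (rule ext) (simp add: algebra_simps)

lemma scale_add_left: "scale (a + b) x = scale a x + scale b x"
  by (rule ext) (simp add: algebra_simps)

lemma scale_scale: "scale a (scale b x) = scale (a * b) x"
  by (rule ext) simp

lemma scale_zero_left [simp]: "scale 0 x = 0"
  by (rule ext) simp

lemma scale_zero_right [simp]: "scale a 0 = 0"
  by (rule ext) simp

lemma scale_minus_one: "scale (- 1) x = - x"
  by (rule ext) simp

lemma vecs_zero [simp]: "0 \<in> vecs n"
  by (simp add: vecs_def)

lemma vecs_add [simp]: "x \<in> vecs n \<Longrightarrow> y \<in> vecs n \<Longrightarrow> x + y \<in> vecs n"
  by (simp add: vecs_def)

lemma vecs_diff [simp]: "x \<in> vecs n \<Longrightarrow> y \<in> vecs n \<Longrightarrow> x - y \<in> vecs n"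
  by (simp add: vecs_def)

lemma vecs_scale [simp]: "x \<in> vecs n \<Longrightarrow> scale a x \<in> vecs n"
  by (simp add: vecs_def)

lemma unit_vec_in_vecs [simp]: "j < n \<Longrightarrow> unit_vec j \<in> vecs n"
  by (simp add: vecs_def unit_vec_def)

lemma vecs_mono: "k \<le> n \<Longrightarrow> vecs k \<subseteq> vecs n"
  by (auto simp: vecs_def)

lemma vecs_SucI: "x \<in> vecs n \<Longrightarrow> x \<in> vecs (Suc n)"
  by (simp add: vecs_def)

definition vec_take :: "nat \<Rightarrow> (nat \<Rightarrow> 'a::comm_ring_1) \<Rightarrow> nat \<Rightarrow> 'a" where
  "vec_take n x i = (if i < n then x i else 0)"

lemma vec_take_in_vecs [simp]: "vec_take n x \<in> vecs n"
  by (simp add: vec_take_def vecs_def)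

lemma vec_take_add: "vec_take n (x + y) = vec_take n x + vec_take n y"
  by (rule ext) (simp add: vec_take_def)

lemma vec_take_scale: "vec_take n (scale a x) = scale a (vec_take n x)"
  by (rule ext) (simp add: vec_take_def)

lemma vec_take_id: "x \<in> vecs n \<Longrightarrow> vec_take n x = x"
  by (rule ext) (simp add: vec_take_def vecs_def)

lemma vec_take_unit_vec: "vec_take n (unit_vec n) = 0"
  by (rule ext) (simp add: vec_take_def unit_vec_def)

lemma vec_take_decompose: "x \<in> vecs (Suc n) \<Longrightarrow> x = vec_take n x + scale (x n) (unit_vec n)"
  by (rule ext) (auto simp: vec_take_def unit_vec_def vecs_def less_Suc_eq)

lemma linear_form_iff:
  "linear_form n f \<longleftrightarrow>
     (\<forall>x\<in>vecs n. \<forall>y\<in>vecs n. f (x + y) = f x + f y) \<and> (\<forall>a. \<forall>x\<in>vecs n. f (scale a x) = a * f x)"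
  by (simp add: linear_form_def plus_fun_def scale_def [abs_def])

lemma linear_form_add: "linear_form n f \<Longrightarrow> x \<in> vecs n \<Longrightarrow> y \<in> vecs n \<Longrightarrow> f (x + y) = f x + f y"
  by (simp add: linear_form_iff)

lemma linear_form_scale: "linear_form n f \<Longrightarrow> x \<in> vecs n \<Longrightarrow> f (scale a x) = a * f x"
  by (simp add: linear_form_iff)

lemma linear_form_zero: "linear_form n f \<Longrightarrow> f 0 = 0"
  using linear_form_scale [of n f 0 0] by simp

lemma linear_form_uminus: "linear_form n f \<Longrightarrow> x \<in> vecs n \<Longrightarrow> f (- x) = - f x"
  using linear_form_scale [of n f x "- 1"] by (simp add: scale_minus_one)

lemma linear_form_diff:
  "linear_form n f \<Longrightarrow> x \<in> vecs n \<Longrightarrow> y \<in> vecs n \<Longrightarrow> f (x - y) = f x - f y"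
  using linear_form_add [of n f x "- y"] linear_form_uminus [of n f y]
  by (simp add: vecs_def)

lemma linear_form_mono: "linear_form n f \<Longrightarrow> k \<le> n \<Longrightarrow> linear_form k f"
  unfolding linear_form_iff using vecs_mono by blast

lemma linear_form_plus: "linear_form n f \<Longrightarrow> linear_form n g \<Longrightarrow> linear_form n (\<lambda>x. f x + g x)"
  by (simp add: linear_form_iff algebra_simps)

lemma linear_form_coordinate: "linear_form n (\<lambda>x. c * x k)"
  by (simp add: linear_form_iff algebra_simps)

lemma linear_form_cong: "(\<And>x. x \<in> vecs n \<Longrightarrow> f x = g x) \<Longrightarrow> linear_form n f \<longleftrightarrow> linear_form n g"
  by (simp add: linear_form_iff)

lemma linear_form_expansion:
  "linear_form n f \<Longrightarrow> x \<in> vecs n \<Longrightarrow> f x = (\<Sum>i<n. x i * f (unit_vec i))"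
proof (induction n arbitrary: x)
  case 0
  then have "x = 0" by (auto simp: vecs_def)
  then show ?case using linear_form_zero [OF "0.prems"(1)] by simp
next
  case (Suc n)
  have "f x = f (vec_take n x + scale (x n) (unit_vec n))"
    using vec_take_decompose [OF Suc.prems(2)] by simp
  also have "\<dots> = f (vec_take n x) + x n * f (unit_vec n)"
    using Suc.prems(1) by (simp add: linear_form_add linear_form_scale vecs_SucI)
  also have "f (vec_take n x) = (\<Sum>i<n. x i * f (unit_vec i))"
    using Suc.IH [OF linear_form_mono [OF Suc.prems(1)]] by (simp add: vec_take_def)
  finally show ?case by simp
qed

definition linear_map :: "nat \<Rightarrow> nat \<Rightarrow> ((nat \<Rightarrow> 'a::comm_ring_1) \<Rightarrow> nat \<Rightarrow> 'a) \<Rightarrow> bool" where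
  "linear_map m n L \<longleftrightarrow> (\<forall>x\<in>vecs m. L x \<in> vecs n) \<and>
     (\<forall>x\<in>vecs m. \<forall>y\<in>vecs m. L (x + y) = L x + L y) \<and> (\<forall>a. \<forall>x\<in>vecs m. L (scale a x) = scale a (L x))"

lemma linear_map_vecs: "linear_map m n L \<Longrightarrow> x \<in> vecs m \<Longrightarrow> L x \<in> vecs n"
  by (simp add: linear_map_def)

lemma linear_map_add: "linear_map m n L \<Longrightarrow> x \<in> vecs m \<Longrightarrow> y \<in> vecs m \<Longrightarrow> L (x + y) = L x + L y"
  by (simp add: linear_map_def)

lemma linear_map_scale: "linear_map m n L \<Longrightarrow> x \<in> vecs m \<Longrightarrow> L (scale a x) = scale a (L x)"
  by (simp add: linear_map_def)

lemma linear_form_comp: "linear_form n f \<Longrightarrow> linear_map m n L \<Longrightarrow> linear_form m (\<lambda>x. f (L x))"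
  by (simp add: linear_form_iff linear_map_def)

lemma linear_map_vec_take: "linear_map m n (vec_take n)"
  by (simp add: linear_map_def vec_take_add vec_take_scale)

section \<open>Units in local rings\<close>

lemma unit_inverseE:
  assumes "(u::'a::comm_monoid_mult) dvd 1"
  obtains w where "w * u = 1"
  using assms by (metis dvdE mult.commute)

lemma mult_dvd_one_iff: "(a * b) dvd 1 \<longleftrightarrow> a dvd 1 \<and> (b::'a::comm_semiring_1) dvd 1"
  using mult_dvd_mono [of a 1 b 1] dvd_mult_left dvd_mult_right by auto

lemma unit_mult_cancel_left:
  assumes "(u::'a::comm_ring_1) dvd 1" "u * a = u * b"
  shows "a = b"
proof -
  obtain w where "w * u = 1" using assms(1) by (rule unit_inverseE)
  then have "a = w * (u * a)" "b = w * (u * b)" by (simp_all add: mult.assoc [symmetric])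
  with assms(2) show ?thesis by simp
qed

lemma not_in_max_ideal_iff [simp]: "a \<notin> max_ideal \<longleftrightarrow> a dvd 1"
  by (simp add: max_ideal_def)

lemma local_ring_zero_nonunit: "local_ring TYPE('a::comm_ring_1) \<Longrightarrow> \<not> (0::'a) dvd 1"
  by (simp add: local_ring_def)

lemma local_ring_nonunit_add:
  "local_ring TYPE('a::comm_ring_1) \<Longrightarrow> \<not> (a::'a) dvd 1 \<Longrightarrow> \<not> b dvd 1 \<Longrightarrow> \<not> (a + b) dvd 1"
  by (simp add: local_ring_def)

lemma local_ring_nonunit_diff:
  "local_ring TYPE('a::comm_ring_1) \<Longrightarrow> \<not> (a::'a) dvd 1 \<Longrightarrow> \<not> b dvd 1 \<Longrightarrow> \<not> (a - b) dvd 1"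
  using local_ring_nonunit_add [of a "- b"] by simp

lemma local_ring_nonunit_sum:
  assumes "local_ring TYPE('a::comm_ring_1)"
  shows "finite I \<Longrightarrow> (\<And>i. i \<in> I \<Longrightarrow> \<not> (g i :: 'a) dvd 1) \<Longrightarrow> \<not> sum g I dvd 1"
proof (induction I rule: finite_induct)
  case empty
  with assms show ?case by (simp add: local_ring_zero_nonunit)
next
  case (insert x F)
  with assms show ?case by (simp add: local_ring_nonunit_add)
qed

lemma local_ring_unit_add_nonunit:
  assumes "local_ring TYPE('a::comm_ring_1)" "(a::'a) dvd 1" "\<not> b dvd 1"
  shows "(a + b) dvd 1"
  using local_ring_nonunit_add [OF assms(1), of "a + b" "- b"] assms(2,3) by fastforce

lemma linear_form_unit_value:
  assumes "local_ring TYPE('a::comm_ring_1)" "linear_form n f" "x \<in> vecs n" "(f x :: 'a) dvd 1"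
  shows "\<exists>i<n. x i dvd 1 \<and> f (unit_vec i) dvd 1"
proof (rule ccontr)
  assume "\<not> ?thesis"
  then have "\<not> (x i * f (unit_vec i)) dvd 1" if "i \<in> {..<n}" for i
    using that by (meson dvd_mult_left dvd_mult_right lessThan_iff)
  then have "\<not> (\<Sum>i<n. x i * f (unit_vec i)) dvd 1"
    by (rule local_ring_nonunit_sum [OF assms(1) finite_lessThan])
  with assms(4) show False
    by (simp add: linear_form_expansion [OF assms(2,3)])
qed

section \<open>Quadratic modules\<close>

lemma polar_eq: "polar q x y = q (x + y) - q x - q y"
  by (simp add: polar_def plus_fun_def)

lemma polar_commute: "polar q x y = polar q y x"
  by (simp add: polar_eq add.commute)

lemma quadratic_add: "q (x + y) = q x + q y + polar q x y"
  by (simp add: polar_eq)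

lemma quadratic_module_iff:
  "quadratic_module n q \<longleftrightarrow>
     (\<forall>a. \<forall>x\<in>vecs n. q (scale a x) = a ^ 2 * q x) \<and>
     (\<forall>x\<in>vecs n. linear_form n (polar q x)) \<and>
     (\<forall>y\<in>vecs n. linear_form n (\<lambda>x. polar q x y))"
  by (simp add: quadratic_module_def scale_def [abs_def])

lemma quadratic_module_scale: "quadratic_module n q \<Longrightarrow> x \<in> vecs n \<Longrightarrow> q (scale a x) = a ^ 2 * q x"
  by (simp add: quadratic_module_iff)

lemma quadratic_module_plus:
  assumes "quadratic_module n q" "quadratic_module n r"
  shows "quadratic_module n (\<lambda>x. q x + r x)"
proof -
  have polar_plus: "polar (\<lambda>x. q x + r x) = (\<lambda>x y. polar q x y + polar r x y)"
    by (simp add: polar_eq fun_eq_iff)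
  show ?thesis
    using assms by (simp add: quadratic_module_iff polar_plus linear_form_plus algebra_simps)
qed

lemma polar_coordinate_square: "polar (\<lambda>x. b * (x k) ^ 2) = (\<lambda>x y. 2 * b * x k * y k)"
  by (simp add: polar_def fun_eq_iff power2_eq_square algebra_simps)

lemma quadratic_module_coordinate_square: "quadratic_module n (\<lambda>x. b * (x k) ^ 2)"
  unfolding quadratic_module_iff polar_coordinate_square
proof (intro conjI ballI allI)
  fix a :: 'a and x :: "nat \<Rightarrow> 'a"
  show "b * (scale a x k) ^ 2 = a ^ 2 * (b * (x k) ^ 2)"
    by (simp add: power_mult_distrib)
  show "linear_form n (\<lambda>y. 2 * b * x k * y k)"
    by (rule linear_form_coordinate)
  have "linear_form n (\<lambda>y. (2 * b * x k) * y k)"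
    by (rule linear_form_coordinate)
  then show "linear_form n (\<lambda>y. 2 * b * y k * x k)"
    by (simp only: ac_simps)
qed

lemma quadratic_module_comp:
  assumes q: "quadratic_module n q" and L: "linear_map m n L"
  shows "quadratic_module m (\<lambda>x. q (L x))"
proof -
  have polar_comp: "polar (\<lambda>x. q (L x)) x y = polar q (L x) (L y)" if "x \<in> vecs m" "y \<in> vecs m" for x y :: "nat \<Rightarrow> 'a"
    using that by (simp add: polar_eq linear_map_add [OF L])
  note L_vecs = linear_map_vecs [OF L]
  show ?thesis
    unfolding quadratic_module_iff
  proof (intro conjI ballI allI)
    fix a :: 'a and x :: "nat \<Rightarrow> 'a" assume "x \<in> vecs m"
    then show "q (L (scale a x)) = a ^ 2 * q (L x)"
      using q by (simp add: linear_map_scale [OF L] L_vecs quadratic_module_scale)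
  next
    fix x :: "nat \<Rightarrow> 'a" assume x: "x \<in> vecs m"
    have "linear_form m (\<lambda>y. polar q (L x) (L y))"
      using q L_vecs [OF x] by (intro linear_form_comp [OF _ L]) (simp add: quadratic_module_iff)
    then show "linear_form m (polar (\<lambda>x. q (L x)) x)"
      using x by (subst linear_form_cong [where g = "\<lambda>y. polar q (L x) (L y)"]) (simp_all add: polar_comp)
  next
    fix y :: "nat \<Rightarrow> 'a" assume y: "y \<in> vecs m"
    have "linear_form m (\<lambda>x. polar q (L x) (L y))"
      using q L_vecs [OF y] by (intro linear_form_comp [OF _ L]) (simp add: quadratic_module_iff)
    then show "linear_form m (\<lambda>x. polar (\<lambda>x. q (L x)) x y)"
      using y by (subst linear_form_cong [where g = "\<lambda>x. polar q (L x) (L y)"]) (simp_all add: polar_comp)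
  qed
qed

locale quadratic_form =
  fixes n :: nat and q :: "(nat \<Rightarrow> 'a::comm_ring_1) \<Rightarrow> 'a"
  assumes quadratic_module: "quadratic_module n q"
begin

abbreviation B where "B \<equiv> polar q"

lemma q_scale: "x \<in> vecs n \<Longrightarrow> q (scale a x) = a ^ 2 * q x"
  by (rule quadratic_module_scale [OF quadratic_module])

lemma q_zero [simp]: "q 0 = 0"
  using q_scale [of 0 0] by simp

lemma q_uminus: "x \<in> vecs n \<Longrightarrow> q (- x) = q x"
  using q_scale [of x "- 1"] by (simp add: scale_minus_one)

lemma linear_form_B_right: "x \<in> vecs n \<Longrightarrow> linear_form n (B x)"
  using quadratic_module by (simp add: quadratic_module_iff)

lemma linear_form_B_left: "y \<in> vecs n \<Longrightarrow> linear_form n (\<lambda>x. B x y)"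
  using quadratic_module by (simp add: quadratic_module_iff)

lemma B_zero_left [simp]: "B 0 x = 0" and B_zero_right [simp]: "B x 0 = 0"
  by (simp_all add: polar_eq)

lemma B_add_right: "x \<in> vecs n \<Longrightarrow> y \<in> vecs n \<Longrightarrow> z \<in> vecs n \<Longrightarrow> B x (y + z) = B x y + B x z"
  by (rule linear_form_add [OF linear_form_B_right])

lemma B_add_left: "x \<in> vecs n \<Longrightarrow> y \<in> vecs n \<Longrightarrow> z \<in> vecs n \<Longrightarrow> B (y + z) x = B y x + B z x"
  using linear_form_add [OF linear_form_B_left, of x y z] by simp

lemma B_scale_right: "x \<in> vecs n \<Longrightarrow> y \<in> vecs n \<Longrightarrow> B x (scale a y) = a * B x y"
  by (rule linear_form_scale [OF linear_form_B_right])

lemma B_scale_left: "x \<in> vecs n \<Longrightarrow> y \<in> vecs n \<Longrightarrow> B (scale a y) x = a * B y x"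
  using linear_form_scale [OF linear_form_B_left, of x y a] by simp

lemma B_diff_right: "x \<in> vecs n \<Longrightarrow> y \<in> vecs n \<Longrightarrow> z \<in> vecs n \<Longrightarrow> B x (y - z) = B x y - B x z"
  by (rule linear_form_diff [OF linear_form_B_right])

lemma B_diff_left: "x \<in> vecs n \<Longrightarrow> y \<in> vecs n \<Longrightarrow> z \<in> vecs n \<Longrightarrow> B (y - z) x = B y x - B z x"
  using linear_form_diff [OF linear_form_B_left, of x y z] by simp

lemmas B_simps = B_add_right B_add_left B_scale_right B_scale_left B_diff_right B_diff_left

lemma q_diff:
  assumes "x \<in> vecs n" "y \<in> vecs n"
  shows "q (x - y) = q x + q y - B x y"
proof -
  have "q (x - y) = q x + q (- y) + B x (- y)"
    using quadratic_add [of q x "- y"] by simp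
  with assms show ?thesis
    by (simp add: q_uminus linear_form_uminus [OF linear_form_B_right])
qed

lemma B_self:
  assumes "x \<in> vecs n"
  shows "B x x = 2 * q x"
proof -
  have "x + x = scale 2 x"
    by (rule ext) simp
  then have "B x x = q (scale 2 x) - q x - q x"
    by (simp add: polar_eq)
  also have "\<dots> = 2 * q x"
    using q_scale [OF assms] by (simp add: power2_eq_square algebra_simps)
  finally show ?thesis .
qed

end

locale nonsingular_quadratic_form = quadratic_form +
  assumes polar_inj: "\<forall>x\<in>vecs n. \<forall>x'\<in>vecs n. (\<forall>y\<in>vecs n. polar q x y = polar q x' y) \<longrightarrow> x = x'"
    and polar_surj: "\<forall>f. linear_form n f \<longrightarrow> (\<exists>x\<in>vecs n. \<forall>y\<in>vecs n. polar q x y = f y)"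

lemma nonsingular_qm_iff: "nonsingular_qm n q \<longleftrightarrow> nonsingular_quadratic_form n q"
  unfolding nonsingular_qm_def nonsingular_quadratic_form_def nonsingular_quadratic_form_axioms_def
    quadratic_form_def
  by (rule refl)

section \<open>Isotropic vectors with a unit coordinate\<close>

context nonsingular_quadratic_form
begin

lemma exists_unit_value:
  assumes "local_ring TYPE('a)" "0 < n"
  shows "\<exists>v\<in>vecs n. q v dvd 1"
proof (rule ccontr)
  assume no_unit: "\<not> ?thesis"
  let ?e = "unit_vec 0 :: nat \<Rightarrow> 'a"
  obtain x where x: "x \<in> vecs n" "\<forall>y\<in>vecs n. B x y = 1 * y 0"
    using polar_surj linear_form_coordinate by blast
  have e: "?e \<in> vecs n" using assms(2) by simp
  have "q (x + ?e) + - q x + - q ?e = 1"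
    using x e by (simp add: polar_eq unit_vec_def)
  moreover have "\<not> q (x + ?e) dvd 1" "\<not> (- q x) dvd 1" "\<not> (- q ?e) dvd 1"
    using no_unit x e by auto
  then have "\<not> (q (x + ?e) + - q x + - q ?e) dvd 1"
    by (intro local_ring_nonunit_add [OF assms(1)])
  ultimately show False by simp
qed

lemma exists_hyperbolic_partner:
  assumes z: "z \<in> vecs n" "q z = 0" and i: "i < n" "z i dvd 1"
  shows "\<exists>w\<in>vecs n. q w = 0 \<and> B z w = 1"
proof -
  obtain d where d: "d * z i = 1"
    using i(2) by (rule unit_inverseE)
  obtain w where w: "w \<in> vecs n" "\<forall>y\<in>vecs n. B w y = d * y i"
    using polar_surj linear_form_coordinate by blast
  have Bwz: "B w z = 1" and Bzw: "B z w = 1"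
    using w z d polar_commute [of q z w] by simp_all
  define w' where "w' = w - scale (q w) z"
  have "w' \<in> vecs n" using w z by (simp add: w'_def)
  moreover have "q w' = 0"
    using q_diff [OF w(1) vecs_scale [OF z(1)]] q_scale [OF z(1)] B_scale_right [OF w(1) z(1)] z(2) Bwz
    by (simp add: w'_def)
  moreover have "B z w' = 1"
    using B_diff_right [OF z(1) w(1) vecs_scale [OF z(1)]] B_scale_right [OF z(1) z(1)] B_self [OF z(1)] z(2) Bzw
    by (simp add: w'_def)
  ultimately show ?thesis by blast
qed

end

context quadratic_form
begin

lemma isotropic_unit_coordinate_of_hyperbolic_pair:
  assumes local: "local_ring TYPE('a)"
    and z: "z \<in> vecs n" "q z = 0" and w: "w \<in> vecs n" "q w = 0" and Bzw: "B z w = 1"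
    and p: "p < n" "\<not> z p dvd 1" "\<not> w p dvd 1"
  shows "\<exists>y\<in>vecs n. q y = 0 \<and> y p dvd 1"
proof -
  let ?e = "unit_vec p :: nat \<Rightarrow> 'a"
  have e: "?e \<in> vecs n" using p(1) by simp
  \<comment> \<open>v is the part of e_p orthogonal to the hyperbolic plane spanned by z and w; adding
    z - q(v) w, which lies in that plane and has value -q(v), makes it isotropic while
    keeping its p-th coordinate a unit.\<close>
  define v where "v = ?e - scale (B ?e w) z - scale (B ?e z) w"
  have v: "v \<in> vecs n" using e z w by (simp add: v_def)
  have "v p = 1 + (- (z p * B ?e w) - w p * B ?e z)"
    by (simp add: v_def unit_vec_def algebra_simps)
  moreover have "\<not> (- (z p * B ?e w) - w p * B ?e z) dvd 1"
    using p(2,3) by (simp add: local_ring_nonunit_diff [OF local] mult_dvd_one_iff)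
  ultimately have vp: "v p dvd 1"
    by (metis local_ring_unit_add_nonunit [OF local] dvd_refl)
  have Bzv: "B z v = 0"
    using z e w B_self [OF z(1)] Bzw polar_commute [of q z ?e] by (simp add: v_def B_simps)
  have Bwv: "B w v = 0"
    using z e w B_self [OF w(1)] Bzw polar_commute [of q z w] polar_commute [of q w ?e]
    by (simp add: v_def B_simps)
  define a where "a = z - scale (q v) w"
  have a: "a \<in> vecs n" using z w by (simp add: a_def)
  have qa: "q a = - q v"
    using q_diff [OF z(1) vecs_scale [OF w(1)]] q_scale [OF w(1)] B_scale_right [OF z(1) w(1)] z(2) w(2) Bzw
    by (simp add: a_def)
  have Bav: "B a v = 0"
    using B_diff_left [OF v z(1) vecs_scale [OF w(1)]] B_scale_left [OF v w(1)] Bzv Bwv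
    by (simp add: a_def)
  have "q (a + v) = 0"
    using quadratic_add [of q a v] qa Bav by simp
  moreover have "(a + v) p = v p + (z p - q v * w p)"
    by (simp add: a_def)
  moreover have "\<not> (z p - q v * w p) dvd 1"
    using p(2,3) by (simp add: local_ring_nonunit_diff [OF local] mult_dvd_one_iff)
  ultimately have "q (a + v) = 0 \<and> (a + v) p dvd 1"
    by (metis local_ring_unit_add_nonunit [OF local vp])
  with a v show ?thesis by (meson vecs_add)
qed

end

lemma (in nonsingular_quadratic_form) isotropic_vector_with_unit_coordinate:
  assumes local: "local_ring TYPE('a)" and "isotropic n q" "p < n"
  shows "\<exists>y\<in>vecs n. q y = 0 \<and> y p dvd 1"
proof -
  obtain z i where z: "z \<in> vecs n" "q z = 0" "i < n" "z i dvd 1"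
    using assms(2) by (auto simp: isotropic_def)
  then obtain w where w: "w \<in> vecs n" "q w = 0" "B z w = 1"
    using exists_hyperbolic_partner by blast
  show ?thesis
  proof (cases "z p dvd 1 \<or> w p dvd 1")
    case True
    with z w show ?thesis by blast
  next
    case False
    with local z w assms(3) show ?thesis
      by (intro isotropic_unit_coordinate_of_hyperbolic_pair) auto
  qed
qed

section \<open>Orthogonal sum with a one-dimensional form\<close>

definition orth_sum_square :: "nat \<Rightarrow> ((nat \<Rightarrow> 'a::comm_ring_1) \<Rightarrow> 'a) \<Rightarrow> 'a \<Rightarrow> (nat \<Rightarrow> 'a) \<Rightarrow> 'a" where
  "orth_sum_square n q b x = q (vec_take n x) + b * (x n) ^ 2"

lemma polar_orth_sum_square:
  "polar (orth_sum_square n q b) x y = polar q (vec_take n x) (vec_take n y) + 2 * b * x n * y n"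
  by (simp add: polar_eq orth_sum_square_def vec_take_add power2_eq_square algebra_simps)

lemma quadratic_module_orth_sum_square:
  "quadratic_module n q \<Longrightarrow> quadratic_module (Suc n) (orth_sum_square n q b)"
  unfolding orth_sum_square_def [abs_def]
  by (intro quadratic_module_plus quadratic_module_comp [OF _ linear_map_vec_take]
      quadratic_module_coordinate_square)

context nonsingular_quadratic_form
begin

lemma orth_sum_square_polar_inj:
  assumes b: "(2 * b) dvd 1" and x: "x \<in> vecs (Suc n)" "x' \<in> vecs (Suc n)"
    and eq: "\<forall>y\<in>vecs (Suc n). polar (orth_sum_square n q b) x y = polar (orth_sum_square n q b) x' y"
  shows "x = x'"
proof -
  have "B (vec_take n x) y = B (vec_take n x') y" if y: "y \<in> vecs n" for y
  proof -
    have "y \<in> vecs (Suc n)" "y n = 0"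
      using y by (auto simp: vecs_def)
    with eq show ?thesis
      by (auto simp: polar_orth_sum_square vec_take_id [OF y])
  qed
  then have take: "vec_take n x = vec_take n x'"
    using polar_inj by simp
  have "2 * b * x n = 2 * b * x' n"
    using bspec [OF eq unit_vec_in_vecs [of n "Suc n"]]
    by (simp add: polar_orth_sum_square vec_take_unit_vec unit_vec_def)
  then have last: "x n = x' n"
    using b unit_mult_cancel_left by blast
  show "x = x'"
  proof
    fix i
    show "x i = x' i"
      using fun_cong [OF take, of i] last x
      by (cases i n rule: linorder_cases) (auto simp: vec_take_def vecs_def)
  qed
qed

lemma orth_sum_square_polar_surj:
  assumes b: "(2 * b) dvd 1" and f: "linear_form (Suc n) f"
  shows "\<exists>x\<in>vecs (Suc n). \<forall>y\<in>vecs (Suc n). polar (orth_sum_square n q b) x y = f y"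
proof -
  let ?e = "unit_vec n :: nat \<Rightarrow> 'a"
  obtain d where d: "d * (2 * b) = 1"
    using b by (rule unit_inverseE)
  obtain x0 where x0: "x0 \<in> vecs n" "\<forall>y\<in>vecs n. B x0 y = f y"
    using polar_surj linear_form_mono [OF f, of n] by auto
  define x where "x = x0 + scale (d * f ?e) ?e"
  have "x \<in> vecs (Suc n)"
    using x0 by (simp add: x_def vecs_SucI)
  moreover have "polar (orth_sum_square n q b) x y = f y" if y: "y \<in> vecs (Suc n)" for y
  proof -
    have "vec_take n x = x0" "x n = d * f ?e"
      using x0 by (simp_all add: x_def vec_take_add vec_take_scale vec_take_unit_vec vec_take_id
          vecs_def unit_vec_def)
    moreover have "B x0 (vec_take n y) = f (vec_take n y)"
      using x0(2) by simp
    ultimately have "polar (orth_sum_square n q b) x y = f (vec_take n y) + (d * (2 * b)) * (y n * f ?e)"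
      by (simp add: polar_orth_sum_square mult_ac)
    also have "\<dots> = f (vec_take n y + scale (y n) ?e)"
      using d f by (simp add: linear_form_add linear_form_scale vecs_SucI)
    also have "\<dots> = f y"
      using vec_take_decompose [OF y] by metis
    finally show ?thesis .
  qed
  ultimately show ?thesis by blast
qed

lemma nonsingular_orth_sum_square:
  assumes "(2 * b) dvd 1"
  shows "nonsingular_quadratic_form (Suc n) (orth_sum_square n q b)"
proof unfold_locales
  show "quadratic_module (Suc n) (orth_sum_square n q b)"
    by (rule quadratic_module_orth_sum_square [OF quadratic_module])
  show "\<forall>x\<in>vecs (Suc n). \<forall>x'\<in>vecs (Suc n). (\<forall>y\<in>vecs (Suc n).
      polar (orth_sum_square n q b) x y = polar (orth_sum_square n q b) x' y) \<longrightarrow> x = x'"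
    using orth_sum_square_polar_inj [OF assms] by blast
  show "\<forall>f. linear_form (Suc n) f \<longrightarrow>
      (\<exists>x\<in>vecs (Suc n). \<forall>y\<in>vecs (Suc n). polar (orth_sum_square n q b) x y = f y)"
    using orth_sum_square_polar_surj [OF assms] by blast
qed

end

section \<open>Orthogonal complement of a vector with unit value\<close>

definition vec_insert :: "nat \<Rightarrow> (nat \<Rightarrow> 'a::comm_ring_1) \<Rightarrow> nat \<Rightarrow> 'a" where
  "vec_insert j y k = (if k < j then y k else if k = j then 0 else y (k - 1))"

definition vec_delete :: "nat \<Rightarrow> (nat \<Rightarrow> 'a::comm_ring_1) \<Rightarrow> nat \<Rightarrow> 'a" where
  "vec_delete j w k = (if k < j then w k else w (Suc k))"

lemma vec_insert_in_vecs: "j \<le> m \<Longrightarrow> y \<in> vecs m \<Longrightarrow> vec_insert j y \<in> vecs (Suc m)"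
  by (simp add: vecs_def vec_insert_def)

lemma vec_delete_in_vecs: "j \<le> m \<Longrightarrow> w \<in> vecs (Suc m) \<Longrightarrow> vec_delete j w \<in> vecs m"
  by (simp add: vecs_def vec_delete_def)

lemma vec_insert_add: "vec_insert j (x + y) = vec_insert j x + vec_insert j y"
  by (rule ext) (simp add: vec_insert_def)

lemma vec_insert_scale: "vec_insert j (scale a x) = scale a (vec_insert j x)"
  by (rule ext) (simp add: vec_insert_def)

lemma vec_delete_diff: "vec_delete j (x - y) = vec_delete j x - vec_delete j y"
  by (rule ext) (simp add: vec_delete_def)

lemma vec_delete_scale: "vec_delete j (scale a x) = scale a (vec_delete j x)"
  by (rule ext) (simp add: vec_delete_def)

lemma vec_delete_insert: "vec_delete j (vec_insert j y) = y"
  by (rule ext) (simp add: vec_delete_def vec_insert_def)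

lemma vec_delete_unit_vec: "vec_delete j (unit_vec j) = 0"
  by (rule ext) (simp add: vec_delete_def unit_vec_def)

lemma vec_insert_delete: "vec_insert j (vec_delete j w) = w - scale (w j) (unit_vec j)"
  by (rule ext) (auto simp: vec_delete_def vec_insert_def unit_vec_def)

text \<open>For d the inverse of l(e_j), this parametrises the kernel of l by the coordinates other
  than the j-th.\<close>

definition kernel_embed :: "((nat \<Rightarrow> 'a::comm_ring_1) \<Rightarrow> 'a) \<Rightarrow> 'a \<Rightarrow> nat \<Rightarrow> (nat \<Rightarrow> 'a) \<Rightarrow> nat \<Rightarrow> 'a" where
  "kernel_embed l d j y = vec_insert j y - scale (d * l (vec_insert j y)) (unit_vec j)"

lemma
  assumes l: "linear_form (Suc m) l" and j: "j \<le> m" and d: "d * l (unit_vec j) = 1"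
  shows linear_map_kernel_embed: "linear_map m (Suc m) (kernel_embed l d j)"
    and bij_betw_kernel_embed: "bij_betw (kernel_embed l d j) (vecs m) {w \<in> vecs (Suc m). l w = 0}"
proof -
  let ?L = "kernel_embed l d j" and ?e = "unit_vec j :: nat \<Rightarrow> 'a"
  have e: "?e \<in> vecs (Suc m)" using j by simp
  have ins: "y \<in> vecs m \<Longrightarrow> vec_insert j y \<in> vecs (Suc m)" for y :: "nat \<Rightarrow> 'a"
    by (rule vec_insert_in_vecs [OF j])
  have L_vecs: "y \<in> vecs m \<Longrightarrow> ?L y \<in> vecs (Suc m)" for y
    using ins e by (simp add: kernel_embed_def)
  have L_kernel: "l (?L y) = 0" if "y \<in> vecs m" for y
  proof -
    have "l (?L y) = l (vec_insert j y) * (1 - d * l ?e)"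
      using that ins e by (simp add: kernel_embed_def linear_form_diff [OF l] linear_form_scale [OF l]
          algebra_simps)
    with d show ?thesis by simp
  qed
  show "linear_map m (Suc m) ?L"
    unfolding linear_map_def
    using L_vecs ins by (simp add: kernel_embed_def vec_insert_add vec_insert_scale linear_form_add [OF l]
        linear_form_scale [OF l] scale_add_left scale_diff_right scale_scale algebra_simps)
  have delete_L: "vec_delete j (?L y) = y" for y
    by (simp add: kernel_embed_def vec_delete_diff vec_delete_scale vec_delete_insert vec_delete_unit_vec)
  have L_delete: "?L (vec_delete j w) = w" if w: "w \<in> vecs (Suc m)" "l w = 0" for w
  proof -
    have "l (vec_insert j (vec_delete j w)) = - (w j * l ?e)"
      using w e by (simp add: vec_insert_delete linear_form_diff [OF l] linear_form_scale [OF l])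
    then have "d * l (vec_insert j (vec_delete j w)) = - w j"
      using d by (simp add: mult.left_commute [of d])
    then show ?thesis
      by (simp add: kernel_embed_def vec_insert_delete fun_eq_iff)
  qed
  show "bij_betw ?L (vecs m) {w \<in> vecs (Suc m). l w = 0}"
    by (rule bij_betw_byWitness [where f' = "vec_delete j"])
      (auto simp: delete_L L_delete L_vecs L_kernel vec_delete_in_vecs [OF j])
qed

text \<open>
  Since c is an inverse of B(v,v), every x splits as proj x + (c B(v,x)) v with proj x
  orthogonal to v; this is what transfers non-singularity from q to q \<circ> L.
\<close>

locale orthogonal_complement = nonsingular_quadratic_form +
  fixes v :: "nat \<Rightarrow> 'a" and c :: 'a and m :: nat and L :: "(nat \<Rightarrow> 'a) \<Rightarrow> nat \<Rightarrow> 'a"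
  assumes v: "v \<in> vecs n" and c: "c * B v v = 1"
    and L_linear: "linear_map m n L" and L_bij: "bij_betw L (vecs m) {w \<in> vecs n. B v w = 0}"
begin

definition proj :: "(nat \<Rightarrow> 'a) \<Rightarrow> nat \<Rightarrow> 'a" where
  "proj x = x - scale (c * B v x) v"

lemma L_vecs: "y \<in> vecs m \<Longrightarrow> L y \<in> vecs n"
  by (rule linear_map_vecs [OF L_linear])

lemma B_v_L: "y \<in> vecs m \<Longrightarrow> B v (L y) = 0"
  using L_bij by (auto simp: bij_betw_def)

lemma inv_L_eqI: "y \<in> vecs m \<Longrightarrow> L y = w \<Longrightarrow> inv_into (vecs m) L w = y"
  using L_bij by (auto simp: bij_betw_def)

lemma proj_vecs: "x \<in> vecs n \<Longrightarrow> proj x \<in> vecs n"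
  using v by (simp add: proj_def)

lemma B_v_proj: "x \<in> vecs n \<Longrightarrow> B v (proj x) = 0"
  using v c by (simp add: proj_def B_simps mult.commute [of c] mult.assoc)

lemma proj_in_range: "x \<in> vecs n \<Longrightarrow> proj x \<in> L ` vecs m"
  using L_bij proj_vecs B_v_proj by (auto simp: bij_betw_def)

lemma proj_add: "x \<in> vecs n \<Longrightarrow> x' \<in> vecs n \<Longrightarrow> proj (x + x') = proj x + proj x'"
  using v by (simp add: proj_def B_add_right distrib_left scale_add_left)

lemma proj_scale: "x \<in> vecs n \<Longrightarrow> proj (scale a x) = scale a (proj x)"
  using v by (simp add: proj_def B_scale_right scale_diff_right scale_scale mult.left_commute)

lemma linear_map_inv_L_proj: "linear_map n m (\<lambda>x. inv_into (vecs m) L (proj x))"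
proof -
  let ?R = "\<lambda>x. inv_into (vecs m) L (proj x)"
  have R: "?R x \<in> vecs m" "L (?R x) = proj x" if "x \<in> vecs n" for x
    using proj_in_range [OF that] by (simp_all add: inv_into_into f_inv_into_f)
  have "?R (x + x') = ?R x + ?R x'" if "x \<in> vecs n" "x' \<in> vecs n" for x x'
    using that R by (intro inv_L_eqI) (simp_all add: linear_map_add [OF L_linear] proj_add)
  moreover have "?R (scale a x) = scale a (?R x)" if "x \<in> vecs n" for a x
    using that R by (intro inv_L_eqI) (simp_all add: linear_map_scale [OF L_linear] proj_scale)
  ultimately show ?thesis
    using R by (simp add: linear_map_def)
qed

lemma polar_comp_L: "y \<in> vecs m \<Longrightarrow> y' \<in> vecs m \<Longrightarrow> polar (\<lambda>y. q (L y)) y y' = B (L y) (L y')"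
  by (simp add: polar_eq linear_map_add [OF L_linear])

lemma comp_polar_inj:
  assumes y: "y \<in> vecs m" "y' \<in> vecs m"
    and eq: "\<forall>z\<in>vecs m. polar (\<lambda>y. q (L y)) y z = polar (\<lambda>y. q (L y)) y' z"
  shows "y = y'"
proof -
  let ?d = "L y - L y'"
  have d: "?d \<in> vecs n" using y by (simp add: L_vecs)
  have "B ?d x = B 0 x" if x: "x \<in> vecs n" for x
  proof -
    obtain z where z: "z \<in> vecs m" "proj x = L z"
      using proj_in_range [OF x] by blast
    have "B ?d (proj x) = 0"
      using bspec [OF eq z(1)] y z by (simp add: polar_comp_L B_diff_left L_vecs)
    moreover have "B ?d v = 0"
      using y v B_v_L polar_commute [of q v] by (simp add: B_diff_left L_vecs)
    moreover have "x = proj x + scale (c * B v x) v"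
      by (simp add: proj_def)
    then have "B ?d x = B ?d (proj x) + c * B v x * B ?d v"
      using d x v proj_vecs by (metis B_add_right B_scale_right vecs_scale)
    ultimately show ?thesis by simp
  qed
  then have "?d = 0"
    using polar_inj d vecs_zero [of n] by blast
  then have "L y = L y'"
    by simp
  with y L_bij show ?thesis
    by (auto simp: bij_betw_def inj_on_def)
qed

lemma comp_polar_surj:
  assumes f: "linear_form m f"
  shows "\<exists>y\<in>vecs m. \<forall>z\<in>vecs m. polar (\<lambda>y. q (L y)) y z = f z"
proof -
  let ?R = "\<lambda>x. inv_into (vecs m) L (proj x)"
  obtain x0 where x0: "x0 \<in> vecs n" "\<forall>x\<in>vecs n. B x0 x = f (?R x)"
    using polar_surj linear_form_comp [OF f linear_map_inv_L_proj] by blast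
  have R: "?R x0 \<in> vecs m" "L (?R x0) = proj x0"
    using proj_in_range [OF x0(1)] by (simp_all add: inv_into_into f_inv_into_f)
  have "polar (\<lambda>y. q (L y)) (?R x0) z = f z" if z: "z \<in> vecs m" for z
  proof -
    have proj_L: "proj (L z) = L z"
      using z by (simp add: proj_def B_v_L)
    have "polar (\<lambda>y. q (L y)) (?R x0) z = B (proj x0) (L z)"
      using R z by (simp add: polar_comp_L)
    also have "\<dots> = B x0 (L z)"
      using x0(1) v z B_v_L polar_commute [of q v]
      by (simp add: proj_def B_diff_left B_scale_left L_vecs)
    also have "\<dots> = f z"
      using x0(2) z proj_L inv_L_eqI by (simp add: L_vecs)
    finally show ?thesis .
  qed
  with R show ?thesis by blast
qed

lemma nonsingular_comp_L: "nonsingular_quadratic_form m (\<lambda>y. q (L y))"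
proof unfold_locales
  show "quadratic_module m (\<lambda>y. q (L y))"
    by (rule quadratic_module_comp [OF quadratic_module L_linear])
  show "\<forall>y\<in>vecs m. \<forall>y'\<in>vecs m.
      (\<forall>z\<in>vecs m. polar (\<lambda>y. q (L y)) y z = polar (\<lambda>y. q (L y)) y' z) \<longrightarrow> y = y'"
    using comp_polar_inj by blast
  show "\<forall>f. linear_form m f \<longrightarrow> (\<exists>y\<in>vecs m. \<forall>z\<in>vecs m. polar (\<lambda>y. q (L y)) y z = f z)"
    using comp_polar_surj by blast
qed

end

context nonsingular_quadratic_form
begin

lemma exists_orthogonal_complement:
  assumes local: "local_ring TYPE('a)" and two: "(2::'a) dvd 1"
    and n: "n = Suc m" and v: "v \<in> vecs n" "q v dvd 1"
  shows "\<exists>L. linear_map m n L \<and> (\<forall>y\<in>vecs m. B v (L y) = 0) \<and> nonsingular_qm m (\<lambda>y. q (L y))"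
proof -
  have "B v v dvd 1"
    using v two by (simp add: B_self mult_dvd_one_iff)
  then obtain c where c: "c * B v v = 1"
    by (rule unit_inverseE)
  obtain j where j: "j < n" "B v (unit_vec j) dvd 1"
    using linear_form_unit_value [OF local linear_form_B_right [OF v(1)] v(1) \<open>B v v dvd 1\<close>] by blast
  obtain d where d: "d * B v (unit_vec j) = 1"
    using j(2) by (rule unit_inverseE)
  let ?L = "kernel_embed (B v) d j"
  have "linear_form (Suc m) (B v)" "j \<le> m"
    using linear_form_B_right [OF v(1)] j n by simp_all
  with d have L: "linear_map m n ?L" "bij_betw ?L (vecs m) {w \<in> vecs n. B v w = 0}"
    using linear_map_kernel_embed bij_betw_kernel_embed n by simp_all
  then interpret orthogonal_complement n q v c m ?L
    using v c by unfold_locales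
  show ?thesis
    using L(1) B_v_L nonsingular_comp_L by (auto simp: nonsingular_qm_iff)
qed

lemma represents_if_orth_sum_isotropic:
  assumes local: "local_ring TYPE('a)" and a: "(2 * a) dvd 1"
    and iso: "isotropic (Suc n) (orth_sum_square n q (- a))"
  shows "\<exists>x\<in>vecs n. q x = a"
proof -
  interpret S: nonsingular_quadratic_form "Suc n" "orth_sum_square n q (- a)"
    using a by (intro nonsingular_orth_sum_square) simp
  obtain y where y: "orth_sum_square n q (- a) y = 0" "y n dvd 1"
    using S.isotropic_vector_with_unit_coordinate [OF local iso] by blast
  obtain d where d: "d * y n = 1"
    using y(2) by (rule unit_inverseE)
  have "q (scale d (vec_take n y)) = a * (d * y n) ^ 2"
    using y(1) by (simp add: q_scale orth_sum_square_def power_mult_distrib algebra_simps)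
  with d show ?thesis
    by (metis vec_take_in_vecs vecs_scale mult_1_right power_one)
qed

lemma anisotropic_imp_nonuniversal_complement:
  assumes local: "local_ring TYPE('a)" and two: "(2::'a) dvd 1"
    and n: "n = Suc m" and aniso: "anisotropic n q"
  shows "\<exists>\<psi> :: (nat \<Rightarrow> 'a) \<Rightarrow> 'a. nonsingular_qm m \<psi> \<and> \<not> universal m \<psi>"
proof -
  obtain v where v: "v \<in> vecs n" "q v dvd 1"
    using exists_unit_value [OF local] n by auto
  obtain L where L: "linear_map m n L" "\<forall>y\<in>vecs m. B v (L y) = 0" "nonsingular_qm m (\<lambda>y. q (L y))"
    using exists_orthogonal_complement [OF local two n v] by blast
  have "\<not> universal m (\<lambda>y. q (L y))"
  proof
    assume "universal m (\<lambda>y. q (L y))"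
    then have "\<exists>y\<in>vecs m. q (L y) = - q v"
      using v(2) unfolding universal_def by simp
    then obtain y where y: "y \<in> vecs m" "q (L y) = - q v" ..
    let ?z = "v + L y"
    have z: "?z \<in> vecs n"
      using v(1) y(1) L(1) by (simp add: linear_map_vecs)
    have "q ?z = 0"
      using quadratic_add [of q v "L y"] y L(2) by simp
    moreover have "B v ?z dvd 1"
      using v y L two by (simp add: B_add_right B_self linear_map_vecs mult_dvd_one_iff)
    then have "\<exists>i<n. ?z i dvd 1"
      using linear_form_unit_value [OF local linear_form_B_right [OF v(1)] z] by blast
    ultimately show False
      using z aniso by (auto simp: anisotropic_def isotropic_def)
  qed
  with L(3) show ?thesis by blast
qed

end

section \<open>The u-invariant\<close>

lemma nonsingular_zero_form: "nonsingular_quadratic_form 0 (\<lambda>x :: nat \<Rightarrow> 'a::comm_ring_1. 0)"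
proof -
  have vecs_0: "x \<in> vecs 0 \<longleftrightarrow> x = 0" for x :: "nat \<Rightarrow> 'a"
    by (auto simp: vecs_def)
  show ?thesis
  proof unfold_locales
    show "quadratic_module 0 (\<lambda>x :: nat \<Rightarrow> 'a. 0)"
      by (simp add: quadratic_module_iff linear_form_iff polar_eq)
  qed (auto simp: vecs_0 polar_eq linear_form_zero)
qed

lemma u_invariant_ge_one:
  assumes local: "local_ring TYPE('a::comm_ring_1)" and two: "(2::'a) dvd 1"
  shows "1 \<le> u_invariant TYPE('a)"
proof -
  let ?q = "orth_sum_square 0 (\<lambda>x. 0) (1::'a)"
  have "nonsingular_qm 1 ?q"
    using nonsingular_quadratic_form.nonsingular_orth_sum_square [OF nonsingular_zero_form, of "1::'a"] two
    by (simp add: nonsingular_qm_iff)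
  moreover have "?q x \<noteq> 0" if "x 0 dvd 1" for x
  proof
    assume "?q x = 0"
    then have "x 0 * x 0 = 0"
      by (simp add: orth_sum_square_def power2_eq_square)
    moreover have "(x 0 * x 0) dvd 1"
      using that by (simp add: mult_dvd_one_iff)
    ultimately show False
      using local_ring_zero_nonunit [OF local] by simp
  qed
  then have "anisotropic 1 ?q"
    by (auto simp: anisotropic_def isotropic_def)
  ultimately have "enat 1 \<le> u_invariant TYPE('a)"
    unfolding u_invariant_def by (intro Sup_upper) blast
  then show ?thesis
    by (simp add: one_enat_def)
qed

lemma universal_if_u_invariant_le:
  fixes q :: "(nat \<Rightarrow> 'a::comm_ring_1) \<Rightarrow> 'a"
  assumes local: "local_ring TYPE('a)" and two: "(2::'a) dvd 1"
    and q: "nonsingular_qm n q" and le: "u_invariant TYPE('a) \<le> enat n"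
  shows "universal n q"
  unfolding universal_def
proof (intro allI impI)
  fix a :: 'a
  assume "a dvd 1"
  with two have two_a: "(2 * a) dvd 1"
    by (simp add: mult_dvd_one_iff)
  interpret nonsingular_quadratic_form n q
    using q by (simp add: nonsingular_qm_iff)
  have "\<not> anisotropic (Suc n) (orth_sum_square n q (- a))"
  proof
    assume "anisotropic (Suc n) (orth_sum_square n q (- a))"
    moreover have "nonsingular_qm (Suc n) (orth_sum_square n q (- a))"
      using two_a by (simp add: nonsingular_qm_iff nonsingular_orth_sum_square)
    ultimately have "enat (Suc n) \<le> u_invariant TYPE('a)"
      unfolding u_invariant_def by (intro Sup_upper) blast
    with le have "enat (Suc n) \<le> enat n"
      by (rule order.trans [rotated])
    then show False
      by simp
  qed
  then show "\<exists>x\<in>vecs n. q x = a"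
    using represents_if_orth_sum_isotropic [OF local two_a] by (simp add: anisotropic_def)
qed

lemma u_invariant_le_if_universal:
  assumes local: "local_ring TYPE('a::comm_ring_1)" and two: "(2::'a) dvd 1"
    and univ: "\<forall>n (q :: (nat \<Rightarrow> 'a) \<Rightarrow> 'a). nonsingular_qm n q \<and> u \<le> enat n \<longrightarrow> universal n q"
  shows "u_invariant TYPE('a) \<le> u"
  unfolding u_invariant_def
proof (rule Sup_least)
  fix s
  assume "s \<in> {enat n | n. \<exists>q :: (nat \<Rightarrow> 'a) \<Rightarrow> 'a. nonsingular_qm n q \<and> anisotropic n q}"
  then obtain n and q :: "(nat \<Rightarrow> 'a) \<Rightarrow> 'a"
    where s: "s = enat n" and q: "nonsingular_qm n q" "anisotropic n q"
    by blast
  show "s \<le> u"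
  proof (rule ccontr)
    assume "\<not> s \<le> u"
    then obtain m where m: "n = Suc m" "u \<le> enat m"
      using s by (cases u; cases n) auto
    interpret nonsingular_quadratic_form n q
      using q(1) by (simp add: nonsingular_qm_iff)
    obtain \<psi> :: "(nat \<Rightarrow> 'a) \<Rightarrow> 'a" where "nonsingular_qm m \<psi>" "\<not> universal m \<psi>"
      using anisotropic_imp_nonuniversal_complement [OF local two m(1) q(2)] by blast
    with univ m(2) show False
      by blast
  qed
qed

theorem propositionA2:
  assumes "local_ring TYPE('a::comm_ring_1)"
    and "(2::'a) dvd 1"
  shows "u_invariant TYPE('a) =
    (LEAST u::enat. 1 \<le> u \<and>
       (\<forall>n (q :: (nat \<Rightarrow> 'a) \<Rightarrow> 'a). nonsingular_qm n q \<and> u \<le> enat n \<longrightarrow> universal n q))"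
proof (rule Least_equality [symmetric])
  show "1 \<le> u_invariant TYPE('a) \<and>
      (\<forall>n (q :: (nat \<Rightarrow> 'a) \<Rightarrow> 'a). nonsingular_qm n q \<and> u_invariant TYPE('a) \<le> enat n \<longrightarrow> universal n q)"
    using u_invariant_ge_one universal_if_u_invariant_le assms by blast
next
  fix u :: enat
  assume "1 \<le> u \<and> (\<forall>n (q :: (nat \<Rightarrow> 'a) \<Rightarrow> 'a). nonsingular_qm n q \<and> u \<le> enat n \<longrightarrow> universal n q)"
  then show "u_invariant TYPE('a) \<le> u"
    using u_invariant_le_if_universal assms by blast
qed

end
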